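(* Let $n$ be a nonnegative integer and $a,c\in\mathbb{C}$ such that all expressions below are defined (no lower parameter zero or a negative integer). Then \[ \left[{}_3F_2\!\left(\left.{a,a-c-n,c \atop \frac{a-n}{2},\frac{1+a-n}{2}}\right| \frac{1}{4}\right)\right]_n =\frac{(1+c-a)_n(1+c)_n}{n!\,(1-a)_n}\,{}_4F_3\!\left(\left.{-n,1+c+n,c,1 \atop \frac{1+c}{2},\frac{2+c}{2},1+c-a}\right| \frac{1}{4}\right). \]
   Context: For $a\in\mathbb{C}$, $(a)_0=1$ and $(a)_k=a(a+1)\cdots(a+k-1)$ for $k\ge1$. The hypergeometric series is ${}_rF_s\!\left(\left.{\alpha_1,\ldots,\alpha_r\atop \beta_1,\ldots,\beta_s}\right|z\right)=\sum_{k\ge0}\frac{(\alpha_1)_k\cdots(\alpha_r)_k}{k!(\beta_1)_k\cdots(\beta_s)_k}z^k$, with no lower parameter zero or a negative integer; it is a finite sum when an upper parameter is $-n$. The bracket $\left[{}_rF_s(\cdots|z)\right]_n$ denotes the sum of the first $n+1$ terms, $\sum_{k=0}^{n}\frac{(\alpha_1)_k\cdots(\alpha_r)_k}{k!(\beta_1)_k\cdots(\beta_s)_k}z^k$. *)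

theory Defs
  imports "HOL-Analysis.Analysis"
begin

definition hyp_term :: "complex list \<Rightarrow> complex list \<Rightarrow> complex \<Rightarrow> nat \<Rightarrow> complex" where
  "hyp_term as bs z k =
     (\<Prod>a\<leftarrow>as. pochhammer a k) / (fact k * (\<Prod>b\<leftarrow>bs. pochhammer b k)) * z ^ k"

definition hyp :: "complex list \<Rightarrow> complex list \<Rightarrow> complex \<Rightarrow> complex" where
  "hyp as bs z = (\<Sum>k. hyp_term as bs z k)"

definition hyp_trunc :: "complex list \<Rightarrow> complex list \<Rightarrow> complex \<Rightarrow> nat \<Rightarrow> complex" where
  "hyp_trunc as bs z n = (\<Sum>k\<le>n. hyp_term as bs z k)"

definition nonpos_int :: "complex \<Rightarrow> bool" where
  "nonpos_int b \<longleftrightarrow> (\<exists>m::nat. b = - of_nat m)"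

end

theory Submission
  imports Defs
begin

(* By the duplication formula (x/2)_k ((x+1)/2)_k = (x)_{2k} / 4^k, the truncated 3F2 on the left is
   L_n(a,c) = sum_{k<=n} (a)_k (a-c-n)_k (c)_k / (k! (a-n)_{2k}), and (1-a)_n times the right-hand side is
   R_n(1+c-a,c) with R_n(b,c) = sum_{k<=n} (-1)^k (c)_k (c+2k+1)_{n-k} (b+k)_{n-k} / (n-k)!.
   Splitting (a)_{k+1} = (a-1)_{k+1} + (k+1) (a)_k expresses L_{n+2}(a,c) through L_{n+1}(a-1,c) and
   L_n(a,c+1); a telescoping sum shows that R satisfies the matching recurrence, so
   (1-a)_n L_n(a,c) = R_n(1+c-a,c) follows by induction on n. *)

lemma pochhammer_Suc_split:
  "pochhammer (a::'a::comm_ring_1) (Suc j) = pochhammer (a - 1) (Suc j) + of_nat (Suc j) * pochhammer a j"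
proof -
  have "pochhammer (a - 1) (Suc j) = (a - 1) * pochhammer a j"
    by (simp add: pochhammer_rec)
  then show ?thesis
    by (simp add: pochhammer_rec' algebra_simps)
qed

lemma pochhammer_Suc_both_ends:
  "pochhammer (z::'a::comm_semiring_1) r * (z + of_nat r) = z * pochhammer (z + 1) r"
  by (metis pochhammer_rec pochhammer_rec' mult.commute)

lemma sum_atMost_peel_ends:
  "(\<Sum>k\<le>m + 2. f k) = f 0 + (\<Sum>j\<le>m. f (Suc j)) + f (m + 2)"
  using sum.atMost_Suc_shift[of f "Suc m"] by (simp add: add.assoc)

lemma pochhammer_double_halves:
  fixes x :: "'a::field_char_0"
  shows "pochhammer (x / 2) k * pochhammer ((x + 1) / 2) k = pochhammer x (2 * k) / 4 ^ k"
proof -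
  have "pochhammer (2 * (x / 2)) (2 * k)
      = of_nat (2 ^ (2 * k)) * pochhammer (x / 2) k * pochhammer (x / 2 + 1 / 2) k"
    by (rule pochhammer_double)
  moreover have "x / 2 + 1 / 2 = (x + 1) / 2"
    by (simp add: field_simps)
  moreover have "(of_nat (2 ^ (2 * k)) :: 'a) = 4 ^ k"
    by (simp add: power_mult)
  ultimately show ?thesis
    by simp
qed

lemma pochhammer_product_resplit:
  assumes "k \<le> n"
  shows "pochhammer z n * pochhammer (z + of_nat n) k
    = pochhammer z (2 * k) * pochhammer (z + of_nat (2 * k)) (n - k)"
proof -
  have "pochhammer z n * pochhammer (z + of_nat n) k = pochhammer z (2 * k + (n - k))"
    using assms pochhammer_product'[of z n k] by (simp add: algebra_simps)
  then show ?thesis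
    by (simp only: pochhammer_product')
qed

lemma pochhammer_minus_of_nat_times_fact:
  assumes "k \<le> n"
  shows "pochhammer (- of_nat n) k * fact (n - k)
    = ((-1) ^ k :: 'a::{comm_ring_1, semiring_char_0}) * fact n"
proof -
  have "pochhammer (- of_nat n :: 'a) k = (-1) ^ k * pochhammer (of_nat (n - k) + 1) k"
    using pochhammer_minus[of "of_nat n :: 'a" k] assms by (simp add: of_nat_diff)
  moreover have "fact (n - k) * pochhammer (of_nat (n - k) + 1) k = (fact n :: 'a)"
    using pochhammer_product'[of "1 :: 'a" "n - k" k] assms by (simp add: pochhammer_fact add_ac)
  ultimately show ?thesis
    by (metis mult.left_commute mult.commute)
qed

lemma pochhammer_nonzero_if_not_nonpos_int:
  "\<not> nonpos_int z \<Longrightarrow> pochhammer z k \<noteq> 0"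
  unfolding nonpos_int_def pochhammer_eq_0_iff by auto

lemma pochhammer_double_nonzero:
  assumes "\<not> nonpos_int (x / 2)" "\<not> nonpos_int ((x + 1) / 2)"
  shows "pochhammer x (2 * k) \<noteq> 0"
  using pochhammer_double_halves[of x k] pochhammer_nonzero_if_not_nonpos_int[OF assms(1)]
    pochhammer_nonzero_if_not_nonpos_int[OF assms(2)]
  by (metis divide_eq_0_iff mult_eq_0_iff)

definition left_term :: "nat \<Rightarrow> 'a::field_char_0 \<Rightarrow> 'a \<Rightarrow> nat \<Rightarrow> 'a" where
  "left_term n a c k = pochhammer a k * pochhammer (a - c - of_nat n) k * pochhammer c k
     / (fact k * pochhammer (a - of_nat n) (2 * k))"

definition left_sum :: "nat \<Rightarrow> 'a::field_char_0 \<Rightarrow> 'a \<Rightarrow> 'a" where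
  "left_sum n a c = (\<Sum>k\<le>n. left_term n a c k)"

(* No side condition is needed: if A (A + 1) (A + 2)_{2j} = 0, all three terms are 0 by division by zero. *)
lemma left_term_Suc_split:
  fixes a c :: "'a::field_char_0" and m j :: nat
  defines "A \<equiv> a - of_nat (m + 2)" and "B \<equiv> a - c - of_nat (m + 2)"
  shows "left_term (m + 2) a c (Suc j)
    = left_term (m + 1) (a - 1) c (Suc j) + B * c / (A * (A + 1)) * left_term m a (c + 1) j"
proof -
  have shifts: "a - 1 - of_nat (m + 1) = A" "a - 1 - c - of_nat (m + 1) = B"
      "a - (c + 1) - of_nat m = B + 1" "a - of_nat m = A + 2"
    by (simp_all add: A_def B_def algebra_simps)
  define N :: 'a where "N = of_nat (Suc j)"
  define D where "D = A * (A + 1) * pochhammer (A + 2) (2 * j)"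
  define U where "U = B * pochhammer (B + 1) j * (c * pochhammer (c + 1) j)"
  have lower: "pochhammer A (2 * Suc j) = D"
    by (simp add: D_def pochhammer_rec algebra_simps numeral_2_eq_2)
  have fact_Suc_j: "fact (Suc j) = N * fact j"
    by (simp add: N_def)
  have L: "left_term (m + 2) a c (Suc j)
      = (pochhammer (a - 1) (Suc j) + N * pochhammer a j) * U / (N * fact j * D)"
    unfolding left_term_def A_def[symmetric] B_def[symmetric] lower fact_Suc_j
    by (subst pochhammer_Suc_split) (simp add: pochhammer_rec U_def N_def mult_ac)
  have R1: "left_term (m + 1) (a - 1) c (Suc j) = pochhammer (a - 1) (Suc j) * U / (N * fact j * D)"
    unfolding left_term_def shifts lower fact_Suc_j by (simp add: pochhammer_rec U_def mult_ac)
  have R2: "B * c / (A * (A + 1)) * left_term m a (c + 1) j = pochhammer a j * U / (fact j * D)"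
    unfolding left_term_def shifts U_def D_def by (simp add: field_simps)
  have "N \<noteq> 0"
    unfolding N_def of_nat_eq_0_iff by simp
  then show ?thesis
    unfolding L R1 R2 by (cases "D = 0") (simp_all add: field_simps)
qed

lemma left_sum_recurrence:
  fixes a c :: "'a::field_char_0" and m :: nat
  defines "A \<equiv> a - of_nat (m + 2)" and "B \<equiv> a - c - of_nat (m + 2)"
  shows "left_sum (m + 2) a c = left_sum (m + 1) (a - 1) c + B * c / (A * (A + 1)) * left_sum m a (c + 1)
    + left_term (m + 2) a c (m + 2)"
proof -
  have "left_sum (m + 2) a c = left_term (m + 2) a c 0 + (\<Sum>j\<le>m. left_term (m + 2) a c (Suc j))
      + left_term (m + 2) a c (m + 2)"
    unfolding left_sum_def by (rule sum_atMost_peel_ends)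
  also have "(\<Sum>j\<le>m. left_term (m + 2) a c (Suc j))
      = (\<Sum>j\<le>m. left_term (m + 1) (a - 1) c (Suc j)) + B * c / (A * (A + 1)) * left_sum m a (c + 1)"
    unfolding left_sum_def A_def B_def left_term_Suc_split by (simp add: sum.distrib sum_distrib_left)
  also have "left_term (m + 2) a c 0 = left_term (m + 1) (a - 1) c 0"
    by (simp add: left_term_def)
  also have "left_term (m + 1) (a - 1) c 0 + (\<Sum>j\<le>m. left_term (m + 1) (a - 1) c (Suc j))
      = left_sum (m + 1) (a - 1) c"
    unfolding left_sum_def using sum.atMost_Suc_shift[of "left_term (m + 1) (a - 1) c" m] by simp
  ultimately show ?thesis
    by (simp add: algebra_simps)
qed

lemma left_term_top:
  fixes a c :: "'a::field_char_0"
  assumes nonzero: "pochhammer (a - of_nat n) (2 * n) \<noteq> 0"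
  shows "pochhammer (1 - a) n * left_term n a c n = pochhammer (1 + c - a) n * pochhammer c n / fact n"
proof -
  have split: "pochhammer (a - of_nat n) (2 * n) = pochhammer (a - of_nat n) n * pochhammer a n"
    using pochhammer_product'[of "a - of_nat n" n n] by (simp add: mult_2)
  have reflect_a: "pochhammer (1 - a) n = (-1) ^ n * pochhammer (a - of_nat n) n"
    using pochhammer_minus[of "a - 1" n] by (simp add: algebra_simps)
  have reflect_b: "pochhammer (a - c - of_nat n) n = (-1) ^ n * pochhammer (1 + c - a) n"
    using pochhammer_minus[of "c - a + of_nat n" n] by (simp add: algebra_simps)
  have "pochhammer (a - of_nat n) n \<noteq> 0" "pochhammer a n \<noteq> 0"
    using nonzero split by auto
  then show ?thesis
    unfolding left_term_def split reflect_a reflect_b by (simp add: field_simps flip: power_mult_distrib)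
qed

definition right_term :: "nat \<Rightarrow> 'a::field_char_0 \<Rightarrow> 'a \<Rightarrow> nat \<Rightarrow> 'a" where
  "right_term n b c k = (-1) ^ k * pochhammer c k * pochhammer (c + of_nat (2 * k) + 1) (n - k)
     * pochhammer (b + of_nat k) (n - k) / fact (n - k)"

definition right_sum :: "nat \<Rightarrow> 'a::field_char_0 \<Rightarrow> 'a \<Rightarrow> 'a" where
  "right_sum n b c = (\<Sum>k\<le>n. right_term n b c k)"

definition right_telescoper :: "nat \<Rightarrow> 'a::field_char_0 \<Rightarrow> 'a \<Rightarrow> nat \<Rightarrow> 'a" where
  "right_telescoper n b c j = (-1) ^ Suc j * pochhammer c (Suc j)
     * pochhammer (c + of_nat (2 * j) + 1) (n - Suc j)
     * pochhammer (b + of_nat (Suc j)) (n - Suc j) / fact (n - Suc j)"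

lemma right_term_telescoping:
  fixes b c :: "'a::field_char_0"
  shows "right_term (j + r + 2) b c (Suc j) - (b - c) * right_term (j + r + 1) (b + 1) c (Suc j)
      + c * (b + of_nat (j + r) + 1) * right_term (j + r) (b + 1) (c + 1) j
    = right_telescoper (j + r + 2) b c j - right_telescoper (j + r + 2) b c (Suc j)"
proof -
  define x where "x = c + 2 * of_nat j"
  define y where "y = b + of_nat j"
  define R :: 'a where "R = of_nat (Suc r)"
  define E where "E = pochhammer (x + 3) r"
  define D where "D = pochhammer (x + 2) r"
  define Q where "Q = pochhammer (y + 2) r"
  define G where "G = pochhammer (y + 1) r"
  define P where "P = (-1) ^ j * pochhammer (c + 1) j / fact r"
  have DE: "D * (x + 1 + R) = (x + 2) * E"
    using pochhammer_Suc_both_ends[of "x + 2" r] by (simp add: D_def E_def R_def algebra_simps)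
  have GQ: "G * (y + R) = (y + 1) * Q"
    using pochhammer_Suc_both_ends[of "y + 1" r] by (simp add: G_def Q_def R_def algebra_simps)
  have "R \<noteq> 0"
    unfolding R_def of_nat_eq_0_iff by simp
  have E_Suc: "pochhammer (x + 3) (Suc r) = E * (x + 2 + R)"
    by (simp add: pochhammer_rec' E_def R_def algebra_simps)
  have D_Suc: "pochhammer (x + 1) (Suc r) = (x + 1) * D"
    by (simp add: pochhammer_rec D_def algebra_simps)
  have Q_Suc: "pochhammer (y + 1) (Suc r) = (y + 1) * Q"
    by (simp add: pochhammer_rec Q_def algebra_simps)
  have c_Suc: "pochhammer c (Suc j) = c * pochhammer (c + 1) j"
    by (simp add: pochhammer_rec)
  have c_Suc_Suc: "pochhammer c (Suc (Suc j)) = c * (c + of_nat j + 1) * pochhammer (c + 1) j"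
    by (simp only: pochhammer_rec'[of c "Suc j"] c_Suc) (simp add: algebra_simps)
  have fact_Suc_r: "fact (Suc r) = R * fact r"
    by (simp add: R_def)
  have idx: "j + r + 2 - Suc j = Suc r" "j + r + 1 - Suc j = r" "j + r - j = r" "j + r + 2 - Suc (Suc j) = r"
      "c + of_nat (2 * Suc j) + 1 = x + 3" "c + 1 + of_nat (2 * j) + 1 = x + 2"
      "c + of_nat (2 * j) + 1 = x + 1" "b + of_nat (j + r) + 1 = y + R"
      "b + of_nat (Suc j) = y + 1" "b + 1 + of_nat (Suc j) = y + 2" "b + 1 + of_nat j = y + 1"
      "b + of_nat (Suc (Suc j)) = y + 2"
    by (simp_all add: x_def y_def R_def algebra_simps)
  have T1: "right_term (j + r + 2) b c (Suc j) = - (c * P * ((y + 1) * Q) * E * (x + 2 + R) / R)"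
    unfolding right_term_def idx E_Suc Q_Suc c_Suc fact_Suc_r P_def
    by (simp add: field_simps minus_divide_left)
  have T2: "(b - c) * right_term (j + r + 1) (b + 1) c (Suc j)
      = ((c + of_nat j + 1) - (y + 1)) * c * P * E * Q"
    unfolding right_term_def idx c_Suc P_def E_def Q_def by (simp add: field_simps y_def)
  have T3: "c * (b + of_nat (j + r) + 1) * right_term (j + r) (b + 1) (c + 1) j = c * P * D * (G * (y + R))"
    unfolding right_term_def idx P_def D_def G_def by (simp add: field_simps)
  have Y1: "right_telescoper (j + r + 2) b c j = - (c * P * ((y + 1) * Q) * (x + 1) * D / R)"
    unfolding right_telescoper_def idx D_Suc Q_Suc c_Suc fact_Suc_r P_def
    by (simp add: field_simps minus_divide_left)
  have Y2: "right_telescoper (j + r + 2) b c (Suc j) = c * (c + of_nat j + 1) * P * E * Q"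
    unfolding right_telescoper_def idx c_Suc_Suc P_def E_def Q_def by (simp add: field_simps)
  have "right_term (j + r + 2) b c (Suc j) - (b - c) * right_term (j + r + 1) (b + 1) c (Suc j)
      + c * (b + of_nat (j + r) + 1) * right_term (j + r) (b + 1) (c + 1) j
      - (right_telescoper (j + r + 2) b c j - right_telescoper (j + r + 2) b c (Suc j))
    = c * P * ((y + 1) * Q) / R * (D * (x + 1 + R) - (x + 2) * E)"
    unfolding T1 T2 T3 GQ Y1 Y2 using \<open>R \<noteq> 0\<close> by (simp add: field_simps)
  then show ?thesis
    using DE by simp
qed

lemma right_term_bottom:
  fixes b c :: "'a::field_char_0"
  shows "right_term (Suc n) b c 0 - (b - c) * right_term n (b + 1) c 0 + right_telescoper (Suc n) b c 0
    = pochhammer b (Suc n) * pochhammer c (Suc n) / fact (Suc n)"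
proof -
  define P where "P = pochhammer (c + 1) n * pochhammer (b + 1) n / fact n"
  define M :: 'a where "M = of_nat (Suc n)"
  have "M \<noteq> 0"
    unfolding M_def of_nat_eq_0_iff by simp
  have fact_Suc_n: "fact (Suc n) = M * fact n"
    by (simp add: M_def)
  have c_Suc: "pochhammer (c + 1) (Suc n) = pochhammer (c + 1) n * (c + M)"
    by (simp add: pochhammer_rec' M_def algebra_simps)
  have b_Suc: "pochhammer b (Suc n) = b * pochhammer (b + 1) n"
    by (rule pochhammer_rec)
  have top: "right_term (Suc n) b c 0 = P * (c + M) * b / M"
    by (simp add: right_term_def P_def fact_Suc_n c_Suc b_Suc mult_ac del: fact_Suc)
  have shifted: "right_term n (b + 1) c 0 = P"
    by (simp add: right_term_def P_def)
  have telescoper: "right_telescoper (Suc n) b c 0 = - c * P"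
    by (simp add: right_telescoper_def P_def pochhammer_rec)
  have product: "pochhammer b (Suc n) * pochhammer c (Suc n) / fact (Suc n) = P * b * c / M"
    unfolding P_def fact_Suc_n b_Suc by (simp add: pochhammer_rec mult_ac del: fact_Suc)
  show ?thesis
    unfolding top shifted telescoper product using \<open>M \<noteq> 0\<close> by (simp add: field_simps)
qed

lemma right_sum_recurrence:
  fixes b c :: "'a::field_char_0"
  shows "right_sum (m + 2) b c
    = (b - c) * right_sum (m + 1) (b + 1) c - c * (b + of_nat m + 1) * right_sum m (b + 1) (c + 1)
    + pochhammer b (m + 2) * pochhammer c (m + 2) / fact (m + 2)"
proof -
  let ?G = "right_telescoper (m + 2) b c"
  have "(\<Sum>j\<le>m. right_term (m + 2) b c (Suc j))
        - (b - c) * (\<Sum>j\<le>m. right_term (m + 1) (b + 1) c (Suc j))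
      + c * (b + of_nat m + 1) * right_sum m (b + 1) (c + 1)
    = (\<Sum>j\<le>m. right_term (m + 2) b c (Suc j) - (b - c) * right_term (m + 1) (b + 1) c (Suc j)
      + c * (b + of_nat m + 1) * right_term m (b + 1) (c + 1) j)"
    unfolding right_sum_def by (simp add: sum.distrib sum_subtractf sum_distrib_left)
  also have "\<dots> = (\<Sum>j\<le>m. ?G j - ?G (Suc j))"
    by (intro sum.cong refl) (auto dest!: le_Suc_ex simp: right_term_telescoping[simplified])
  also have "\<dots> = ?G 0 - ?G (Suc m)"
    by (rule sum_telescope)
  also have "?G (Suc m) = right_term (m + 2) b c (m + 2)"
    by (simp add: right_telescoper_def right_term_def)
  finally have middle: "(\<Sum>j\<le>m. right_term (m + 2) b c (Suc j))
    = (b - c) * (\<Sum>j\<le>m. right_term (m + 1) (b + 1) c (Suc j))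
      - c * (b + of_nat m + 1) * right_sum m (b + 1) (c + 1)
      + ?G 0 - right_term (m + 2) b c (m + 2)"
    by (simp add: algebra_simps)
  have lower: "right_sum (m + 1) (b + 1) c
      = right_term (m + 1) (b + 1) c 0 + (\<Sum>j\<le>m. right_term (m + 1) (b + 1) c (Suc j))"
    unfolding right_sum_def using sum.atMost_Suc_shift[of "right_term (m + 1) (b + 1) c" m] by simp
  have upper: "right_sum (m + 2) b c
      = right_term (m + 2) b c 0 + (\<Sum>j\<le>m. right_term (m + 2) b c (Suc j))
      + right_term (m + 2) b c (m + 2)"
    unfolding right_sum_def by (rule sum_atMost_peel_ends)
  have ends: "right_term (m + 2) b c 0 - (b - c) * right_term (m + 1) (b + 1) c 0 + ?G 0
      = pochhammer b (m + 2) * pochhammer c (m + 2) / fact (m + 2)"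
    using right_term_bottom[of "m + 1" b c] by simp
  show ?thesis
    unfolding upper lower middle ends[symmetric] by (simp add: algebra_simps)
qed

lemma left_sum_eq_right_sum_step:
  fixes a c :: "'a::field_char_0"
  assumes nonzero: "pochhammer (a - of_nat (m + 2)) (2 * (m + 2)) \<noteq> 0"
    and IH_m: "pochhammer (1 - a) m * left_sum m a (c + 1) = right_sum m (2 + c - a) (c + 1)"
    and IH_Suc_m: "pochhammer (2 - a) (m + 1) * left_sum (m + 1) (a - 1) c = right_sum (m + 1) (2 + c - a) c"
  shows "pochhammer (1 - a) (m + 2) * left_sum (m + 2) a c = right_sum (m + 2) (1 + c - a) c"
proof -
  define A where "A = a - of_nat (m + 2)"
  define B where "B = a - c - of_nat (m + 2)"
  define K where "K = B * c / (A * (A + 1))"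
  have "A * (A + 1) \<noteq> 0"
    using pochhammer_neq_0_mono[OF nonzero, of 2] by (simp add: A_def numeral_2_eq_2 pochhammer_rec)
  have "pochhammer (1 - a + of_nat m) 2 = A * (A + 1)"
    by (simp add: numeral_2_eq_2 pochhammer_rec A_def algebra_simps)
  then have "pochhammer (1 - a) (m + 2) = pochhammer (1 - a) m * (A * (A + 1))"
    by (simp only: pochhammer_product')
  then have coefficient: "pochhammer (1 - a) (m + 2) * (K * X) = c * B * (pochhammer (1 - a) m * X)" for X
    using \<open>A * (A + 1) \<noteq> 0\<close> unfolding K_def by (simp add: field_simps)
  have rec_a: "pochhammer (1 - a) (m + 2) = (1 - a) * pochhammer (2 - a) (m + 1)"
    using pochhammer_rec[of "1 - a" "m + 1"] by simp
  have "pochhammer (1 - a) (m + 2) * left_sum (m + 2) a c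
      = (1 - a) * (pochhammer (2 - a) (m + 1) * left_sum (m + 1) (a - 1) c)
        + c * B * (pochhammer (1 - a) m * left_sum m a (c + 1))
        + pochhammer (1 - a) (m + 2) * left_term (m + 2) a c (m + 2)"
    unfolding left_sum_recurrence[of m a c, folded B_def, folded A_def, folded K_def] distrib_left coefficient
    unfolding rec_a by (simp add: mult.assoc)
  also have "\<dots> = (1 - a) * right_sum (m + 1) (2 + c - a) c + c * B * right_sum m (2 + c - a) (c + 1)
      + pochhammer (1 + c - a) (m + 2) * pochhammer c (m + 2) / fact (m + 2)"
    unfolding IH_m IH_Suc_m left_term_top[OF nonzero] ..
  also have "\<dots> = right_sum (m + 2) (1 + c - a) c"
    using right_sum_recurrence[of m "1 + c - a" c] by (simp add: B_def algebra_simps)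
  finally show ?thesis .
qed

lemma left_sum_eq_right_sum:
  fixes a c :: "'a::field_char_0"
  assumes "pochhammer (a - of_nat n) (2 * n) \<noteq> 0"
  shows "pochhammer (1 - a) n * left_sum n a c = right_sum n (1 + c - a) c"
  using assms
proof (induction n arbitrary: a c rule: induct_nat_012)
  case 0
  then show ?case
    by (simp add: left_sum_def left_term_def right_sum_def right_term_def)
next
  case 1
  have "pochhammer (a - 1) 2 = (a - 1) * a"
    by (simp add: numeral_2_eq_2 pochhammer_rec)
  then have "a - 1 \<noteq> 0" "a \<noteq> 0"
    using 1 by auto
  have left: "left_sum (Suc 0) a c = 1 + a * (a - c - 1) * c / ((a - 1) * a)"
    by (simp add: left_sum_def left_term_def numeral_2_eq_2 pochhammer_rec)
  have right: "right_sum (Suc 0) (1 + c - a) c = (c + 1) * (1 + c - a) - c"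
    by (simp add: right_sum_def right_term_def)
  show ?case
    unfolding left right using \<open>a - 1 \<noteq> 0\<close> \<open>a \<noteq> 0\<close> by (simp add: field_simps)
next
  case (ge2 m)
  have nonzero: "pochhammer (a - of_nat (m + 2)) (2 * (m + 2)) \<noteq> 0"
    using ge2.prems by simp
  have "pochhammer (a - of_nat (m + 2)) (2 * (m + 2))
      = pochhammer (a - of_nat (m + 2)) 2 * pochhammer (a - of_nat m) (2 * m + 2)"
    using pochhammer_product'[of "a - of_nat (m + 2)" 2 "2 * m + 2"] by (simp add: algebra_simps)
  then have "pochhammer (a - of_nat m) (2 * m) \<noteq> 0"
    using nonzero pochhammer_neq_0_mono[of "a - of_nat m" "2 * m + 2" "2 * m"] by auto
  then have IH_m: "pochhammer (1 - a) m * left_sum m a (c + 1) = right_sum m (2 + c - a) (c + 1)"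
    using ge2.IH(1)[of a "c + 1"] by (simp add: algebra_simps)
  have "pochhammer (a - 1 - of_nat (Suc m)) (2 * Suc m) \<noteq> 0"
    using pochhammer_neq_0_mono[OF nonzero, of "2 * Suc m"] by (simp add: algebra_simps)
  then have IH_Suc_m:
      "pochhammer (2 - a) (m + 1) * left_sum (m + 1) (a - 1) c = right_sum (m + 1) (2 + c - a) c"
    using ge2.IH(2)[of "a - 1" c] by (simp add: algebra_simps)
  show ?case
    using left_sum_eq_right_sum_step[OF nonzero IH_m IH_Suc_m] by simp
qed

lemma hyp_eq_hyp_trunc_if_terminating:
  "hyp (- of_nat n # as) bs z = hyp_trunc (- of_nat n # as) bs z n"
  unfolding hyp_def hyp_trunc_def
proof (rule suminf_finite)
  fix k
  assume "k \<notin> {..n}"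
  then have "pochhammer (- of_nat n :: complex) k = 0"
    by (simp add: pochhammer_of_nat_eq_0_iff)
  then show "hyp_term (- of_nat n # as) bs z k = 0"
    unfolding hyp_term_def by simp
qed simp

lemma hyp_term_eq_left_term:
  "hyp_term [a, a - c - of_nat n, c] [(a - of_nat n) / 2, (1 + a - of_nat n) / 2] (1 / 4) k
    = left_term n a c k"
proof -
  have "(1 + a - of_nat n) / 2 = (a - of_nat n + 1) / 2"
    by (simp add: algebra_simps)
  then have "pochhammer ((a - of_nat n) / 2) k * pochhammer ((1 + a - of_nat n) / 2) k
      = pochhammer (a - of_nat n) (2 * k) / 4 ^ k"
    using pochhammer_double_halves by metis
  then show ?thesis
    unfolding hyp_term_def left_term_def by (simp add: field_simps power_one_over)
qed

lemma hyp_term_eq_right_term: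
  fixes b c :: complex
  assumes "k \<le> n" and "pochhammer b k \<noteq> 0" and "pochhammer (1 + c) (2 * k) \<noteq> 0"
  shows "pochhammer b n * pochhammer (1 + c) n / fact n
      * hyp_term [- of_nat n, 1 + c + of_nat n, c, 1] [(1 + c) / 2, (2 + c) / 2, b] (1 / 4) k
    = right_term n b c k"
proof -
  have "(2 + c) / 2 = (1 + c + 1) / 2"
    by (simp add: algebra_simps)
  then have duplication:
      "pochhammer ((1 + c) / 2) k * pochhammer ((2 + c) / 2) k = pochhammer (1 + c) (2 * k) / 4 ^ k"
    using pochhammer_double_halves by metis
  have summand: "hyp_term [- of_nat n, 1 + c + of_nat n, c, 1] [(1 + c) / 2, (2 + c) / 2, b] (1 / 4) k
      = pochhammer (- of_nat n) k * pochhammer (1 + c + of_nat n) k * pochhammer c k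
        / (pochhammer (1 + c) (2 * k) * pochhammer b k)"
  proof -
    have "pochhammer ((1 + c) / 2) k * pochhammer ((2 + c) / 2) k \<noteq> 0"
      using duplication assms(3) by simp
    then show ?thesis
      unfolding hyp_term_def using duplication assms(2)
      by (simp add: pochhammer_fact[symmetric] power_one_over field_simps)
  qed
  have upper_b: "pochhammer b n = pochhammer b k * pochhammer (b + of_nat k) (n - k)"
    using pochhammer_product[OF assms(1)] .
  have upper_c: "pochhammer (1 + c) n * pochhammer (1 + c + of_nat n) k
      = pochhammer (1 + c) (2 * k) * pochhammer (c + of_nat (2 * k) + 1) (n - k)"
    using pochhammer_product_resplit[OF assms(1), of "1 + c"] by (simp add: add_ac)
  have lower_n: "pochhammer (- of_nat n :: complex) k = (-1) ^ k * fact n / fact (n - k)"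
    using pochhammer_minus_of_nat_times_fact[OF assms(1), where 'a = complex] by (simp add: field_simps)
  have "pochhammer b n * pochhammer (1 + c) n / fact n
      * hyp_term [- of_nat n, 1 + c + of_nat n, c, 1] [(1 + c) / 2, (2 + c) / 2, b] (1 / 4) k
    = pochhammer (b + of_nat k) (n - k) * (pochhammer (1 + c) n * pochhammer (1 + c + of_nat n) k)
      * pochhammer (- of_nat n) k * pochhammer c k / (fact n * pochhammer (1 + c) (2 * k))"
    unfolding summand upper_b using assms(2) by (simp add: field_simps)
  also have "\<dots> = right_term n b c k"
    unfolding upper_c lower_n right_term_def using assms(3) by (simp add: field_simps)
  finally show ?thesis .
qed

theorem mainTheorem15:
  fixes n :: nat and a c :: complex
  assumes "\<not> nonpos_int ((a - of_nat n) / 2)"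
      and "\<not> nonpos_int ((1 + a - of_nat n) / 2)"
      and "\<not> nonpos_int ((1 + c) / 2)"
      and "\<not> nonpos_int ((2 + c) / 2)"
      and "\<not> nonpos_int (1 + c - a)"
      and "pochhammer (1 - a) n \<noteq> 0"
  shows "hyp_trunc [a, a - c - of_nat n, c] [(a - of_nat n) / 2, (1 + a - of_nat n) / 2] (1/4) n
       = pochhammer (1 + c - a) n * pochhammer (1 + c) n / (fact n * pochhammer (1 - a) n)
         * hyp [- of_nat n, 1 + c + of_nat n, c, 1] [(1 + c) / 2, (2 + c) / 2, 1 + c - a] (1/4)"
proof -
  have "pochhammer (a - of_nat n) (2 * n) \<noteq> 0"
    by (rule pochhammer_double_nonzero) (use assms(1,2) in \<open>simp_all add: algebra_simps\<close>)
  then have "hyp_trunc [a, a - c - of_nat n, c] [(a - of_nat n) / 2, (1 + a - of_nat n) / 2] (1/4) n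
      = right_sum n (1 + c - a) c / pochhammer (1 - a) n"
    using left_sum_eq_right_sum[of a n c] assms(6)
    unfolding hyp_trunc_def hyp_term_eq_left_term left_sum_def by (simp add: field_simps)
  also have "right_sum n (1 + c - a) c = pochhammer (1 + c - a) n * pochhammer (1 + c) n / fact n
      * hyp_trunc [- of_nat n, 1 + c + of_nat n, c, 1] [(1 + c) / 2, (2 + c) / 2, 1 + c - a] (1/4) n"
  proof -
    have "pochhammer (1 + c) (2 * k) \<noteq> 0" for k
      by (rule pochhammer_double_nonzero) (use assms(3,4) in \<open>simp_all add: algebra_simps\<close>)
    then show ?thesis
      using pochhammer_nonzero_if_not_nonpos_int[OF assms(5)]
      unfolding right_sum_def hyp_trunc_def sum_distrib_left
      by (intro sum.cong refl hyp_term_eq_right_term[symmetric]) auto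
  qed
  finally show ?thesis
    by (simp add: hyp_eq_hyp_trunc_if_terminating)
qed

end
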